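(* If a space $X$ is $\mathbb Q$-selective, then $X$ is $Y$-selective for every countable metrizable space $Y$.
   Context: All spaces are assumed $T_1$. $\mathbb Q$ is the space of rationals with the usual topology. For spaces $Y$, $X$, a map $\varphi:Y\to\mathcal P(X)\setminus\{\emptyset\}$ is lower semicontinuous (l.s.c.) if $\{y:\varphi(y)\cap U\neq\emptyset\}$ is open in $Y$ for every open $U\subseteq X$; a selection is a map $f:Y\to X$ with $f(y)\in\varphi(y)$ for all $y$. $X$ is $Y$-selective if every l.s.c. map from $Y$ to the nonempty closed subsets of $X$ has a continuous selection. *)

theory Defs
  imports "HOL-Analysis.Analysis"
begin

definition lsc_map :: "'b topology \<Rightarrow> 'a topology \<Rightarrow> ('b \<Rightarrow> 'a set) \<Rightarrow> bool" where
  "lsc_map Y X phi \<longleftrightarrow>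
     (\<forall>y\<in>topspace Y. phi y \<noteq> {} \<and> phi y \<subseteq> topspace X) \<and>
     (\<forall>U. openin X U \<longrightarrow> openin Y {y \<in> topspace Y. phi y \<inter> U \<noteq> {}})"

definition selective :: "'b topology \<Rightarrow> 'a topology \<Rightarrow> bool" where
  "selective Y X \<longleftrightarrow>
     (\<forall>phi. lsc_map Y X phi \<and> (\<forall>y\<in>topspace Y. closedin X (phi y)) \<longrightarrow>
        (\<exists>f. continuous_map Y X f \<and> (\<forall>y\<in>topspace Y. f y \<in> phi y)))"

definition rationals_top :: "real topology" where
  "rationals_top = subtopology euclideanreal \<rat>"

end

theory Submission
  imports Defs
begin

text \<open>Selectivity is invariant under homeomorphisms and passes to closed subspaces: an l.s.c.
  map on a closed subspace extends to the whole space by the constant value \<open>X\<close> off the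
  subspace. So it suffices to embed a countable metric space \<open>M\<close> onto a closed subset of
  \<open>\<rat>\<close>. Enumerate \<open>M\<close> as \<open>e\<^sub>0, e\<^sub>1, \<dots>\<close> and choose radii \<open>\<rho>\<^sub>j \<rightarrow> 0\<close> that are not
  distances, so that all balls \<open>B(e\<^sub>n, \<rho>\<^sub>j)\<close> are clopen. The first index \<open>n \<le> j\<close> with
  \<open>y \<in> B(e\<^sub>n, \<rho>\<^sub>j)\<close> is locally constant in \<open>y\<close> and eventually equals the index of \<open>y\<close>
  itself. Writing its changes as digits of a mixed-radix expansion gives a finite sum, i.e. a
  rational code of \<open>y\<close>; the place values decay so fast that the first differing digit dominates,
  which makes the code a homeomorphism onto its image. A rational \<open>q\<close> has a finite expansion,
  so codes close to \<open>q\<close> share their leading digits with \<open>q\<close> and then have only zeros for a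
  while; this pins them near a single centre \<open>e\<^sub>n\<close>, and continuity at \<open>e\<^sub>n\<close> forces
  \<open>q\<close> to be its code. Hence the image is closed in \<open>\<rat>\<close>.\<close>

section \<open>Selectivity under homeomorphisms and closed subspaces\<close>

lemma selective_homeomorphic_space:
  assumes sel: "selective Y X" and hom: "Y homeomorphic_space Y'"
  shows "selective Y' X"
  unfolding selective_def
proof (intro allI impI)
  fix phi assume phi: "lsc_map Y' X phi \<and> (\<forall>y\<in>topspace Y'. closedin X (phi y))"
  obtain h g where "homeomorphic_maps Y Y' h g"
    using hom unfolding homeomorphic_space_def by blast
  then have h: "continuous_map Y Y' h" and g: "continuous_map Y' Y g"
    and gh: "\<And>y. y \<in> topspace Y' \<Longrightarrow> h (g y) = y"
    by (auto simp: homeomorphic_maps_def)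
  have "lsc_map Y X (phi \<circ> h)"
    unfolding lsc_map_def
  proof (intro conjI ballI allI impI)
    fix U assume "openin X U"
    then have "openin Y' {y \<in> topspace Y'. phi y \<inter> U \<noteq> {}}"
      using phi unfolding lsc_map_def by blast
    then have "openin Y {x \<in> topspace Y. h x \<in> {y \<in> topspace Y'. phi y \<inter> U \<noteq> {}}}"
      by (rule openin_continuous_map_preimage[OF h])
    then show "openin Y {x \<in> topspace Y. (phi \<circ> h) x \<inter> U \<noteq> {}}"
      using continuous_map_image_subset_topspace[OF h] by (auto elim!: back_subst[of "openin Y"])
  qed (use phi continuous_map_image_subset_topspace[OF h] in \<open>auto simp: lsc_map_def\<close>)
  moreover have "\<forall>x\<in>topspace Y. closedin X ((phi \<circ> h) x)"
    using phi continuous_map_image_subset_topspace[OF h] by auto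
  ultimately obtain f where f: "continuous_map Y X f" "\<forall>x\<in>topspace Y. f x \<in> (phi \<circ> h) x"
    using sel unfolding selective_def by blast
  have "continuous_map Y' X (f \<circ> g)"
    using g f(1) by (rule continuous_map_compose)
  moreover have "\<forall>y\<in>topspace Y'. (f \<circ> g) y \<in> phi y"
  proof
    fix y assume y: "y \<in> topspace Y'"
    then have "g y \<in> topspace Y"
      using continuous_map_image_subset_topspace[OF g] by blast
    then show "(f \<circ> g) y \<in> phi y"
      using f(2) gh[OF y] by fastforce
  qed
  ultimately show "\<exists>f. continuous_map Y' X f \<and> (\<forall>y\<in>topspace Y'. f y \<in> phi y)"
    by blast
qed

lemma selective_closedin_subtopology:
  assumes sel: "selective Z X" and A: "closedin Z A"
  shows "selective (subtopology Z A) X"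
  unfolding selective_def
proof (intro allI impI)
  fix phi assume phi: "lsc_map (subtopology Z A) X phi \<and> (\<forall>y\<in>topspace (subtopology Z A). closedin X (phi y))"
  have AZ: "A \<subseteq> topspace Z" using A by (rule closedin_subset)
  then have top_A: "topspace (subtopology Z A) = A" by auto
  show "\<exists>f. continuous_map (subtopology Z A) X f \<and> (\<forall>y\<in>topspace (subtopology Z A). f y \<in> phi y)"
  proof (cases "A = {}")
    case True
    then show ?thesis by (auto intro: continuous_map_on_empty)
  next
    case False
    then have X_ne: "topspace X \<noteq> {}"
      using phi AZ unfolding lsc_map_def by fastforce
    define psi where "psi z = (if z \<in> A then phi z else topspace X)" for z
    have psi: "psi z \<noteq> {}" "psi z \<subseteq> topspace X" "closedin X (psi z)" for z
      using phi X_ne top_A by (auto simp: psi_def lsc_map_def)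
    have "lsc_map Z X psi"
      unfolding lsc_map_def
    proof (intro conjI ballI allI impI)
      fix U assume U: "openin X U"
      then have "openin (subtopology Z A) {z \<in> A. phi z \<inter> U \<noteq> {}}"
        using phi top_A unfolding lsc_map_def by metis
      then obtain V where V: "openin Z V" "{z \<in> A. phi z \<inter> U \<noteq> {}} = V \<inter> A"
        by (auto simp: openin_subtopology)
      show "openin Z {z \<in> topspace Z. psi z \<inter> U \<noteq> {}}"
      proof (cases "topspace X \<inter> U = {}")
        case True
        then have "{z \<in> topspace Z. psi z \<inter> U \<noteq> {}} = {}"
          using psi(2) by blast
        then show ?thesis by (metis openin_empty)
      next
        case False
        then have "{z \<in> topspace Z. psi z \<inter> U \<noteq> {}} = V \<union> (topspace Z - A)"
          using V AZ openin_subset[OF V(1)] by (auto simp: psi_def)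
        moreover have "openin Z (topspace Z - A)"
          using A by blast
        ultimately show ?thesis
          using V(1) by (simp add: openin_Un)
      qed
    qed (use psi in blast)+
    moreover have "\<forall>z\<in>topspace Z. closedin X (psi z)"
      using psi(3) by blast
    ultimately obtain f where f: "continuous_map Z X f" "\<forall>z\<in>topspace Z. f z \<in> psi z"
      using sel unfolding selective_def by blast
    have "continuous_map (subtopology Z A) X f"
      using f(1) by (rule continuous_map_from_subtopology)
    moreover have "\<forall>z\<in>topspace (subtopology Z A). f z \<in> phi z"
      using f(2) top_A AZ by (force simp: psi_def)
    ultimately show ?thesis by blast
  qed
qed

section \<open>Mixed-radix expansions\<close>

text \<open>Place values: the factor \<open>4\<close> keeps the tail after position \<open>k\<close> below a third of the
  unit \<open>1 / denom k\<close> when digit \<open>m\<close> is at most \<open>m + 2\<close>, and the factorial makes every positive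
  integer divide some \<open>denom K\<close>.\<close>

definition denom :: "nat \<Rightarrow> nat" where
  "denom j = 4 ^ j * fact (j + 2)"

definition digit_sum :: "(nat \<Rightarrow> nat) \<Rightarrow> nat \<Rightarrow> real" where
  "digit_sum a N = (\<Sum>m<N. real (a m) / real (denom m))"

lemma denom_pos: "0 < denom j"
  by (simp add: denom_def)

lemma denom_Suc: "denom (Suc j) = 4 * (j + 3) * denom j"
  by (simp add: denom_def fact_Suc algebra_simps)

lemma denom_dvd: "i \<le> j \<Longrightarrow> denom i dvd denom j"
  by (induction j rule: dec_induct) (simp_all add: denom_Suc)

lemma denom_mono: "i \<le> j \<Longrightarrow> denom i \<le> denom j"
  using denom_dvd denom_pos by (blast intro: dvd_imp_le)

lemma dvd_denom: "0 < n \<Longrightarrow> n dvd denom n"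
  unfolding denom_def by (simp add: dvd_fact)

lemma ex_inverse_denom_less:
  assumes "0 < \<epsilon>"
  shows "\<exists>K. 1 / real (denom K) < \<epsilon>"
proof -
  obtain K where K: "1 / \<epsilon> < real K"
    using reals_Archimedean2 by blast
  have "K \<le> denom K"
    using dvd_denom[of K] denom_pos[of K] by (cases "K = 0") (auto intro: dvd_imp_le)
  then have "1 / \<epsilon> < real (denom K)"
    using K by linarith
  then show ?thesis
    using assms denom_pos[of K] by (metis divide_less_eq mult.commute of_nat_0_less_iff)
qed

lemma digit_weight_le_telescope:
  "real (j + 3) / real (denom (Suc j)) \<le> 1 / (3 * real (denom j)) - 1 / (3 * real (denom (Suc j)))"
proof -
  define b where "b = real (denom j)"
  have b: "0 < b" unfolding b_def using denom_pos by simp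
  have Suc_j: "real (denom (Suc j)) = 4 * (real j + 3) * b"
    unfolding b_def by (simp add: denom_Suc)
  have "real (j + 3) / real (denom (Suc j)) = 1 / (4 * b)"
    unfolding Suc_j using b by (simp add: divide_simps)
  also have "\<dots> \<le> 1 / (3 * b) - 1 / (12 * (real j + 3) * b)"
  proof -
    have "1 / (12 * (real j + 3) * b) \<le> 1 / (12 * b)"
      using b by (intro divide_left_mono mult_right_mono) auto
    moreover have "1 / (3 * b) - 1 / (4 * b) = 1 / (12 * b)"
      using b by (simp add: field_simps)
    ultimately show ?thesis by linarith
  qed
  also have "\<dots> = 1 / (3 * b) - 1 / (3 * real (denom (Suc j)))"
    unfolding Suc_j by (simp add: mult.assoc)
  finally show ?thesis unfolding b_def .
qed

lemma digit_tail_le: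
  assumes "\<And>m. a m \<le> m + 2"
  shows "(\<Sum>m\<in>{Suc k..<N}. real (a m) / real (denom m)) \<le> 1 / (3 * real (denom k))"
proof -
  have telescope: "(\<Sum>m\<in>{Suc k..<Suc (k + t)}. real (m + 2) / real (denom m))
      \<le> 1 / (3 * real (denom k)) - 1 / (3 * real (denom (k + t)))" for t
  proof (induction t)
    case (Suc t)
    then show ?case
      using digit_weight_le_telescope[of "k + t"] by (simp add: add.commute add.left_commute)
  qed simp
  show ?thesis
  proof (cases "N \<le> Suc k")
    case True
    then show ?thesis using denom_pos[of k] by simp
  next
    case False
    then obtain t where N: "N = Suc (k + t)"
      using that[of "N - Suc k"] by simp
    have "(\<Sum>m\<in>{Suc k..<N}. real (a m) / real (denom m))
        \<le> (\<Sum>m\<in>{Suc k..<N}. real (m + 2) / real (denom m))"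
      by (intro sum_mono divide_right_mono of_nat_mono assms) simp
    also have "\<dots> \<le> 1 / (3 * real (denom k)) - 1 / (3 * real (denom (k + t)))"
      unfolding N by (rule telescope)
    also have "\<dots> \<le> 1 / (3 * real (denom k))"
      by simp
    finally show ?thesis .
  qed
qed

lemma digit_sum_split:
  "K \<le> N \<Longrightarrow> digit_sum a N = digit_sum a K + (\<Sum>m\<in>{K..<N}. real (a m) / real (denom m))"
  unfolding digit_sum_def lessThan_atLeast0 by (simp add: sum.atLeastLessThan_concat)

lemma digit_sum_diff_ge:
  assumes a: "\<And>m. a m \<le> m + 2" and b: "\<And>m. b m \<le> m + 2"
    and "K < N" and "\<exists>j\<le>K. a j \<noteq> b j"
  shows "2 / (3 * real (denom K)) \<le> \<bar>digit_sum a N - digit_sum b N\<bar>"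
proof -
  define j where "j = (LEAST j. a j \<noteq> b j)"
  obtain i where i: "i \<le> K" "a i \<noteq> b i"
    using assms(4) by blast
  have j: "a j \<noteq> b j" "j \<le> K"
    unfolding j_def using LeastI[of "\<lambda>j. a j \<noteq> b j" i] Least_le[of "\<lambda>j. a j \<noteq> b j" i] i by auto
  have common: "digit_sum a j = digit_sum b j"
    unfolding digit_sum_def j_def using not_less_Least by (intro sum.cong) auto
  define tail where "tail c = (\<Sum>m\<in>{Suc j..<N}. real (c m) / real (denom m))" for c
  have split: "digit_sum c N = digit_sum c j + real (c j) / real (denom j) + tail c" for c
    using digit_sum_split[of j N c] j(2) \<open>K < N\<close> by (simp add: tail_def sum.atLeast_Suc_lessThan)
  have tail: "0 \<le> tail c \<and> tail c \<le> 1 / (3 * real (denom j))" if "\<And>m. c m \<le> m + 2" for c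
    unfolding tail_def using digit_tail_le[of c j N] that by (auto intro: sum_nonneg)
  have "1 / real (denom j) \<le> \<bar>real (a j) / real (denom j) - real (b j) / real (denom j)\<bar>"
  proof -
    have "1 \<le> \<bar>real (a j) - real (b j)\<bar>"
      using j(1) by linarith
    then show ?thesis
      using denom_pos[of j] by (simp add: diff_divide_distrib[symmetric] divide_right_mono)
  qed
  moreover have "2 / (3 * real (denom K)) \<le> 2 / (3 * real (denom j))"
    using denom_mono[OF j(2)] denom_pos[of j] by (simp add: frac_le)
  moreover have "1 / real (denom j) - 1 / (3 * real (denom j)) = 2 / (3 * real (denom j))"
    by simp
  ultimately show ?thesis
    using common tail[OF a] tail[OF b] split[of a] split[of b] by linarith
qed

lemma digit_eq_if_digit_sum_eq:
  assumes "\<And>m. a m \<le> m + 2" "\<And>m. b m \<le> m + 2"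
    and "digit_sum a (Suc K) = digit_sum b (Suc K)" "j \<le> K"
  shows "a j = b j"
proof (rule ccontr)
  assume "a j \<noteq> b j"
  then have "2 / (3 * real (denom K)) \<le> \<bar>digit_sum a (Suc K) - digit_sum b (Suc K)\<bar>"
    using assms by (intro digit_sum_diff_ge) auto
  then show False
    using assms(3) denom_pos[of K] by simp
qed

lemma denom_mult_digit_sum_Ints: "real (denom K) * digit_sum a (Suc K) \<in> \<int>"
proof -
  have "real (denom K) * digit_sum a (Suc K) = real (\<Sum>m<Suc K. a m * (denom K div denom m))"
    unfolding digit_sum_def sum_distrib_left of_nat_sum
  proof (intro sum.cong refl)
    fix m assume "m \<in> {..<Suc K}"
    then have "denom m dvd denom K" by (simp add: denom_dvd)
    then show "real (denom K) * (real (a m) / real (denom m)) = real (a m * (denom K div denom m))"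
      using denom_pos[of m] by (auto simp: real_of_nat_div)
  qed
  then show ?thesis by (metis Ints_of_nat)
qed

lemma ex_denom_mult_Ints:
  assumes "q \<in> \<rat>"
  shows "\<exists>K. real (denom K) * q \<in> \<int>"
proof -
  obtain a b where ab: "0 < b" "q = of_int a / of_int b"
    using Rats_cases'[OF assms] by blast
  define K where "K = nat b"
  have K: "int K = b" "0 < K"
    using ab(1) by (simp_all add: K_def)
  have "int K dvd int (denom K)"
    using dvd_denom[OF K(2)] by simp
  then obtain c where c: "int (denom K) = b * c"
    unfolding K(1) by (auto elim: dvdE)
  have "real (denom K) = of_int b * of_int c"
    using c by (metis of_int_mult of_int_of_nat_eq)
  then have "real (denom K) * q = of_int (a * c)"
    using ab by simp
  then show ?thesis by (metis Ints_of_int)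
qed

section \<open>A closed embedding of a countable metric space into the rationals\<close>

text \<open>Radii that are not distances make every ball \<open>mball (e n) (rho j)\<close> clopen.\<close>

locale enumerated_metric = Metric_space M d for M :: "'a set" and d +
  fixes e :: "nat \<Rightarrow> 'a" and rho :: "nat \<Rightarrow> real"
  assumes range_e: "range e = M"
    and rho_pos: "\<And>j. 0 < rho j"
    and rho_tendsto_0: "rho \<longlonglongrightarrow> 0"
    and rho_not_dist: "\<And>j x y. x \<in> M \<Longrightarrow> y \<in> M \<Longrightarrow> d x y \<noteq> rho j"
begin

lemma e_in_M: "e n \<in> M"
  using range_e by auto

definition centre_idx :: "nat \<Rightarrow> 'a \<Rightarrow> nat" where
  "centre_idx j y =
     (if \<exists>n\<le>j. d (e n) y < rho j then LEAST n. n \<le> j \<and> d (e n) y < rho j else Suc j)"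

lemma centre_idx_le: "centre_idx j y \<le> Suc j"
proof (cases "\<exists>n\<le>j. d (e n) y < rho j")
  case True
  then obtain n where n: "n \<le> j \<and> d (e n) y < rho j"
    by blast
  then have "(LEAST n. n \<le> j \<and> d (e n) y < rho j) \<le> n"
    by (rule Least_le)
  then show ?thesis
    using True n unfolding centre_idx_def by simp
next
  case False
  then show ?thesis
    unfolding centre_idx_def if_not_P[OF False] by simp
qed

lemma dist_centre_idx_less:
  assumes "centre_idx j y \<le> j"
  shows "d (e (centre_idx j y)) y < rho j"
proof (cases "\<exists>n\<le>j. d (e n) y < rho j")
  case True
  then show ?thesis
    unfolding centre_idx_def if_P[OF True] using LeastI_ex[OF True] by blast
next
  case False
  then have "centre_idx j y = Suc j"
    by (auto simp: centre_idx_def)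
  then show ?thesis
    using assms by simp
qed

lemma centre_idx_locally_constant:
  assumes "y \<in> M"
  shows "\<exists>r>0. \<forall>z\<in>M. d y z < r \<longrightarrow> (\<forall>j\<le>K. centre_idx j z = centre_idx j y)"
proof -
  define gaps where "gaps = (\<lambda>(n, j). \<bar>d (e n) y - rho j\<bar>) ` ({..K} \<times> {..K})"
  define r where "r = Min gaps"
  have gaps: "finite gaps" "gaps \<noteq> {}" "\<forall>g\<in>gaps. 0 < g"
    unfolding gaps_def using rho_not_dist e_in_M assms by auto
  have r_pos: "0 < r"
    unfolding r_def using gaps by simp
  have r_le: "r \<le> \<bar>d (e n) y - rho j\<bar>" if "n \<le> K" "j \<le> K" for n j
    unfolding r_def using gaps(1)
  proof (rule Min_le)
    show "\<bar>d (e n) y - rho j\<bar> \<in> gaps"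
      unfolding gaps_def using that by (intro rev_image_eqI[of "(n, j)"]) auto
  qed
  have "centre_idx j z = centre_idx j y" if z: "z \<in> M" "d y z < r" and j: "j \<le> K" for z j
  proof -
    have "d (e n) z < rho j \<longleftrightarrow> d (e n) y < rho j" if "n \<le> j" for n
      using triangle[OF e_in_M assms z(1), of n] triangle[OF e_in_M z(1) assms, of n]
        commute[of z y] r_le[of n j] that j z(2) by linarith
    then have "(\<lambda>n. n \<le> j \<and> d (e n) z < rho j) = (\<lambda>n. n \<le> j \<and> d (e n) y < rho j)"
      by auto
    then show ?thesis
      by (simp only: centre_idx_def)
  qed
  then show ?thesis
    using r_pos by blast
qed

lemma centre_idx_eqI:
  assumes "e n = y" "y \<in> M" "n \<le> j" and before: "\<And>i. i < n \<Longrightarrow> rho j < d (e i) y"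
  shows "centre_idx j y = n"
proof -
  have n_near: "n \<le> j \<and> d (e n) y < rho j"
    using assms(1-3) rho_pos by simp
  have "(LEAST m. m \<le> j \<and> d (e m) y < rho j) = n"
  proof (rule Least_equality)
    fix m assume m: "m \<le> j \<and> d (e m) y < rho j"
    show "n \<le> m"
    proof (rule ccontr)
      assume "\<not> n \<le> m"
      then show False
        using before[of m] m by linarith
    qed
  qed (rule n_near)
  then show ?thesis
    unfolding centre_idx_def using n_near by auto
qed

lemma eventually_centre_idx_eq:
  assumes "y \<in> M"
  shows "\<exists>n. e n = y \<and> (\<forall>\<^sub>F j in sequentially. centre_idx j y = n)"
proof -
  obtain k where "e k = y"
    using range_e assms by blast
  define n where "n = (LEAST n. e n = y)"
  have n: "e n = y"
    unfolding n_def using \<open>e k = y\<close> by (rule LeastI)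
  have "\<forall>\<^sub>F j in sequentially. rho j < d (e i) y" if "i < n" for i
  proof -
    have "e i \<noteq> y"
      using that unfolding n_def by (rule not_less_Least)
    then have "0 < d (e i) y"
      using zero[OF e_in_M assms, of i] nonneg[of "e i" y] by linarith
    with rho_tendsto_0 show ?thesis
      by (rule order_tendstoD(2))
  qed
  then have "\<forall>\<^sub>F j in sequentially. \<forall>i\<in>{..<n}. rho j < d (e i) y"
    by (intro eventually_ball_finite) auto
  moreover have "\<forall>\<^sub>F j in sequentially. n \<le> j"
    by (rule eventually_ge_at_top)
  ultimately have "\<forall>\<^sub>F j in sequentially. centre_idx j y = n"
    by eventually_elim (use n assms in \<open>auto intro: centre_idx_eqI\<close>)
  then show ?thesis
    using n by blast
qed

text \<open>Digits record the changes of \<open>centre_idx j y\<close> in \<open>j\<close>, so they vanish eventually and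
  \<open>code y\<close> is a finite sum.\<close>

fun digit :: "nat \<Rightarrow> 'a \<Rightarrow> nat" where
  "digit 0 y = Suc (centre_idx 0 y)"
| "digit (Suc j) y = (if centre_idx (Suc j) y = centre_idx j y then 0 else Suc (centre_idx (Suc j) y))"

lemma digit_le: "digit j y \<le> j + 2"
  using centre_idx_le[of j y] centre_idx_le[of 0 y] by (cases j) auto

lemma digits_eq_iff_centre_idx_eq:
  "(\<forall>j\<le>K. digit j y = digit j z) \<longleftrightarrow> (\<forall>j\<le>K. centre_idx j y = centre_idx j z)"
proof (induction K)
  case 0
  then show ?case by simp
next
  case (Suc K)
  have upto_Suc: "(\<forall>j\<le>Suc K. P j) \<longleftrightarrow> (\<forall>j\<le>K. P j) \<and> P (Suc K)" for P
    by (auto simp: le_Suc_eq)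
  have "digit (Suc K) y = digit (Suc K) z \<longleftrightarrow> centre_idx (Suc K) y = centre_idx (Suc K) z"
    if "centre_idx K y = centre_idx K z"
    using that by auto
  then show ?case
    unfolding upto_Suc Suc.IH by blast
qed

lemma centre_idx_eq_if_digits_zero:
  assumes "\<And>j. K < j \<Longrightarrow> j \<le> K' \<Longrightarrow> digit j y = 0" and "K \<le> K'"
  shows "centre_idx K' y = centre_idx K y"
  using assms(2)
proof (induction K' rule: dec_induct)
  case (step j)
  then show ?case
    using assms(1)[of "Suc j"] by (simp split: if_splits)
qed simp

lemma eventually_digit_eq_0:
  assumes "y \<in> M"
  shows "\<forall>\<^sub>F j in sequentially. digit j y = 0"
proof -
  obtain n where "\<forall>\<^sub>F j in sequentially. centre_idx j y = n"
    using eventually_centre_idx_eq[OF assms] by blast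
  then have "\<forall>\<^sub>F j in sequentially. centre_idx (Suc j) y = n \<and> centre_idx j y = n"
    by (intro eventually_conj eventually_sequentially_Suc[THEN iffD2])
  then have "\<forall>\<^sub>F j in sequentially. digit (Suc j) y = 0"
    by eventually_elim simp
  then show ?thesis
    by (rule eventually_sequentially_Suc[THEN iffD1])
qed

definition code :: "'a \<Rightarrow> real" where
  "code y = (\<Sum>j | digit j y \<noteq> 0. real (digit j y) / real (denom j))"

definition code_upto :: "nat \<Rightarrow> 'a \<Rightarrow> real" where
  "code_upto K y = digit_sum (\<lambda>j. digit j y) (Suc K)"

lemma code_Rats: "code y \<in> \<rat>"
  unfolding code_def by (intro Rats_sum Rats_divide) auto

lemma eventually_code_eq_digit_sum:
  assumes "y \<in> M"
  shows "\<forall>\<^sub>F N in sequentially. code y = digit_sum (\<lambda>j. digit j y) N"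
proof -
  obtain N0 where N0: "\<And>j. N0 \<le> j \<Longrightarrow> digit j y = 0"
    using eventually_digit_eq_0[OF assms] by (auto simp: eventually_sequentially)
  have "code y = digit_sum (\<lambda>j. digit j y) N" if "N0 \<le> N" for N
    unfolding code_def digit_sum_def
  proof (rule sum.mono_neutral_left)
    show "{j. digit j y \<noteq> 0} \<subseteq> {..<N}"
    proof
      fix j assume "j \<in> {j. digit j y \<noteq> 0}"
      then have "\<not> N0 \<le> j"
        using N0 by auto
      then show "j \<in> {..<N}"
        using that by simp
    qed
  qed auto
  then show ?thesis
    by (auto simp: eventually_sequentially)
qed

lemma code_tail_bounds:
  assumes "y \<in> M"
  shows "0 \<le> code y - code_upto K y" and "code y - code_upto K y \<le> 1 / (3 * real (denom K))"
    and "K < j \<Longrightarrow> digit j y \<noteq> 0 \<Longrightarrow> 1 / real (denom j) \<le> code y - code_upto K y"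
proof -
  have "\<forall>\<^sub>F N in sequentially. code y = digit_sum (\<lambda>j. digit j y) N \<and> Suc (Suc (K + j)) \<le> N"
    by (intro eventually_conj eventually_code_eq_digit_sum[OF assms] eventually_ge_at_top)
  then obtain N where N: "code y = digit_sum (\<lambda>j. digit j y) N" "Suc (Suc (K + j)) \<le> N"
    using eventually_happens'[OF sequentially_bot] by blast
  have tail: "code y - code_upto K y = (\<Sum>m\<in>{Suc K..<N}. real (digit m y) / real (denom m))"
    unfolding code_upto_def N(1) using digit_sum_split[of "Suc K" N] N(2) by simp
  then show "0 \<le> code y - code_upto K y"
    by (simp add: sum_nonneg)
  show "code y - code_upto K y \<le> 1 / (3 * real (denom K))"
    unfolding tail by (rule digit_tail_le) (rule digit_le)
  assume j: "K < j" "digit j y \<noteq> 0"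
  have "1 / real (denom j) \<le> real (digit j y) / real (denom j)"
    using j(2) by (intro divide_right_mono) auto
  also have "\<dots> \<le> (\<Sum>m\<in>{Suc K..<N}. real (digit m y) / real (denom m))"
    using j N(2) by (intro member_le_sum) auto
  finally show "1 / real (denom j) \<le> code y - code_upto K y"
    unfolding tail .
qed

lemma code_continuous_at:
  assumes "y \<in> M" and "0 < \<epsilon>"
  shows "\<exists>r>0. \<forall>z\<in>M. d y z < r \<longrightarrow> \<bar>code z - code y\<bar> < \<epsilon>"
proof -
  obtain K where K: "1 / real (denom K) < \<epsilon>"
    using ex_inverse_denom_less[OF assms(2)] by blast
  obtain r where r: "0 < r" "\<forall>z\<in>M. d y z < r \<longrightarrow> (\<forall>j\<le>K. centre_idx j z = centre_idx j y)"
    using centre_idx_locally_constant[OF assms(1)] by blast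
  have "\<bar>code z - code y\<bar> < \<epsilon>" if z: "z \<in> M" "d y z < r" for z
  proof -
    have "\<forall>j\<le>K. digit j z = digit j y"
      using r(2) z digits_eq_iff_centre_idx_eq by blast
    then have "code_upto K z = code_upto K y"
      unfolding code_upto_def digit_sum_def by (intro sum.cong) auto
    moreover have "1 / (3 * real (denom K)) < \<epsilon>"
      using K denom_pos[of K] by (simp add: divide_simps)
    ultimately show ?thesis
      using code_tail_bounds(1,2)[OF z(1), of K]
        code_tail_bounds(1,2)[OF assms(1), of K] by linarith
  qed
  then show ?thesis
    using r(1) by blast
qed

lemma digits_eq_if_code_close:
  assumes "y \<in> M" "z \<in> M" and close: "\<bar>code z - code y\<bar> < 2 / (3 * real (denom K))"
  shows "\<forall>j\<le>K. digit j z = digit j y"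
proof (rule ccontr)
  assume "\<not> (\<forall>j\<le>K. digit j z = digit j y)"
  moreover have "\<forall>\<^sub>F N in sequentially. code z = digit_sum (\<lambda>j. digit j z) N
      \<and> code y = digit_sum (\<lambda>j. digit j y) N \<and> K < N"
    using eventually_code_eq_digit_sum[OF assms(2)] eventually_code_eq_digit_sum[OF assms(1)]
      eventually_gt_at_top by (intro eventually_conj)
  then obtain N where "code z = digit_sum (\<lambda>j. digit j z) N"
      "code y = digit_sum (\<lambda>j. digit j y) N" "K < N"
    using eventually_happens'[OF sequentially_bot] by blast
  ultimately have "2 / (3 * real (denom K)) \<le> \<bar>code z - code y\<bar>"
    using digit_sum_diff_ge[OF digit_le digit_le] by auto
  then show False
    using close by linarith
qed

lemma code_inverse_continuous_at:
  assumes "y \<in> M" and "0 < r"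
  shows "\<exists>\<epsilon>>0. \<forall>z\<in>M. \<bar>code z - code y\<bar> < \<epsilon> \<longrightarrow> d y z < r"
proof -
  obtain n where n: "e n = y" "\<forall>\<^sub>F j in sequentially. centre_idx j y = n"
    using eventually_centre_idx_eq[OF assms(1)] by blast
  have "\<forall>\<^sub>F K in sequentially. centre_idx K y = n \<and> n \<le> K \<and> rho K < r"
    using n(2) eventually_ge_at_top order_tendstoD(2)[OF rho_tendsto_0 assms(2)]
    by (intro eventually_conj)
  then obtain K where K: "centre_idx K y = n" "n \<le> K" "rho K < r"
    using eventually_happens'[OF sequentially_bot] by blast
  have "d y z < r" if z: "z \<in> M" "\<bar>code z - code y\<bar> < 2 / (3 * real (denom K))" for z
  proof -
    have "centre_idx K z = n"
      using digits_eq_if_code_close[OF assms(1) z] K(1) digits_eq_iff_centre_idx_eq by blast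
    then have "d y z < rho K"
      using dist_centre_idx_less[of K z] K(2) n(1) by simp
    then show ?thesis
      using K(3) by linarith
  qed
  moreover have "0 < 2 / (3 * real (denom K))"
    using denom_pos[of K] by simp
  ultimately show ?thesis
    by blast
qed

lemma inj_on_code: "inj_on code M"
proof (rule inj_onI)
  fix y z assume yz: "y \<in> M" "z \<in> M" "code y = code z"
  have small: "d y z < r" if "0 < r" for r
    using code_inverse_continuous_at[OF yz(1) that] yz by auto
  then have "\<not> 0 < d y z"
    using small[of "d y z"] by blast
  then have "d y z = 0"
    using nonneg[of y z] by linarith
  then show "y = z"
    using yz zero by blast
qed

lemma code_upto_eq_if_close:
  assumes z: "z \<in> M" and q: "real (denom K) * q \<in> \<int>"
    and close: "\<bar>code z - q\<bar> < 1 / (3 * real (denom K))"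
  shows "code_upto K z = q"
proof -
  define B where "B = real (denom K)"
  have B: "0 < B"
    unfolding B_def using denom_pos by simp
  have "\<bar>code_upto K z - q\<bar> < 2 / (3 * B)"
    using code_tail_bounds(1,2)[OF z, of K] close unfolding B_def by linarith
  then have "\<bar>B * code_upto K z - B * q\<bar> < 1"
    using B by (simp add: abs_mult right_diff_distrib[symmetric] pos_less_divide_eq mult.commute)
  moreover have "B * code_upto K z \<in> \<int>" "B * q \<in> \<int>"
    using q unfolding B_def code_upto_def by (simp_all add: denom_mult_digit_sum_Ints)
  ultimately have "B * code_upto K z = B * q"
    using Ints_eq_abs_less1 by blast
  then show ?thesis
    using B by simp
qed

lemma centre_idx_eq_if_tail_less:
  assumes z: "z \<in> M" and "K \<le> K'" and close: "code z - code_upto K z < 1 / real (denom K')"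
  shows "centre_idx K' z = centre_idx K z"
proof (rule centre_idx_eq_if_digits_zero[OF _ \<open>K \<le> K'\<close>])
  fix j assume j: "K < j" "j \<le> K'"
  show "digit j z = 0"
  proof (rule ccontr)
    assume "digit j z \<noteq> 0"
    then have "1 / real (denom j) \<le> code z - code_upto K z"
      using code_tail_bounds(3)[OF z j(1)] by blast
    moreover have "1 / real (denom K') \<le> 1 / real (denom j)"
      using denom_mono[OF j(2)] denom_pos[of j] by (simp add: frac_le)
    ultimately show False
      using close by linarith
  qed
qed

lemma dist_centre_idx_less_if_code_near:
  assumes z0: "z0 \<in> M" "\<bar>code z0 - q\<bar> < 1 / (3 * real (denom K))"
    and z: "z \<in> M" "\<bar>code z - q\<bar> < 1 / (3 * real (denom K))" "\<bar>code z - q\<bar> < 1 / real (denom K')"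
    and q: "real (denom K) * q \<in> \<int>" and "K < K'"
  shows "d (e (centre_idx K z0)) z < rho K'"
proof -
  have z_upto: "code_upto K z = q" and z0_upto: "code_upto K z0 = q"
    using code_upto_eq_if_close[OF z(1) q z(2)] code_upto_eq_if_close[OF z0(1) q z0(2)] .
  have "\<forall>j\<le>K. digit j z = digit j z0"
  proof (intro allI impI)
    fix j assume "j \<le> K"
    with z_upto z0_upto show "digit j z = digit j z0"
      unfolding code_upto_def by (intro digit_eq_if_digit_sum_eq[OF digit_le digit_le]) auto
  qed
  then have "centre_idx K z = centre_idx K z0"
    using digits_eq_iff_centre_idx_eq by blast
  moreover have "centre_idx K' z = centre_idx K z"
    using z(1,3) \<open>K < K'\<close> z_upto by (intro centre_idx_eq_if_tail_less) auto
  moreover have "centre_idx K z0 \<le> K'"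
    using centre_idx_le[of K z0] \<open>K < K'\<close> by simp
  ultimately show ?thesis
    using dist_centre_idx_less[of K' z] by simp
qed

lemma code_image_separated:
  assumes q: "q \<in> \<rat>" "q \<notin> code ` M"
  shows "\<exists>\<epsilon>>0. \<forall>z\<in>M. \<epsilon> \<le> \<bar>code z - q\<bar>"
proof (rule ccontr)
  assume "\<not> ?thesis"
  then have near: "\<exists>z\<in>M. \<bar>code z - q\<bar> < \<epsilon>" if "0 < \<epsilon>" for \<epsilon>
    using that by (auto simp: not_le)
  obtain K where K: "real (denom K) * q \<in> \<int>"
    using ex_denom_mult_Ints[OF q(1)] by blast
  obtain z0 where z0: "z0 \<in> M" "\<bar>code z0 - q\<bar> < 1 / (3 * real (denom K))"
    using near[of "1 / (3 * real (denom K))"] denom_pos[of K] by auto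
  define y where "y = e (centre_idx K z0)"
  define \<eta> where "\<eta> = \<bar>q - code y\<bar>"
  have y: "y \<in> M"
    unfolding y_def by (rule e_in_M)
  then have \<eta>: "0 < \<eta>"
    unfolding \<eta>_def using q(2) by auto
  obtain r where r: "0 < r" "\<forall>z\<in>M. d y z < r \<longrightarrow> \<bar>code z - code y\<bar> < \<eta> / 2"
    using code_continuous_at[OF y, of "\<eta> / 2"] \<eta> by auto
  have "\<forall>\<^sub>F K' in sequentially. K < K' \<and> rho K' < r"
    by (intro eventually_conj eventually_gt_at_top order_tendstoD(2)[OF rho_tendsto_0 r(1)])
  then obtain K' where K': "K < K'" "rho K' < r"
    using eventually_happens'[OF sequentially_bot] by blast
  have "0 < min (\<eta> / 2) (min (1 / (3 * real (denom K))) (1 / real (denom K')))"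
    using \<eta> denom_pos[of K] denom_pos[of K'] by simp
  then obtain z where "z \<in> M"
    "\<bar>code z - q\<bar> < min (\<eta> / 2) (min (1 / (3 * real (denom K))) (1 / real (denom K')))"
    using near by blast
  then have z: "z \<in> M" "\<bar>code z - q\<bar> < 1 / (3 * real (denom K))"
      "\<bar>code z - q\<bar> < 1 / real (denom K')" "\<bar>code z - q\<bar> < \<eta> / 2"
    by simp_all
  have "d y z < r"
    unfolding y_def using dist_centre_idx_less_if_code_near[OF z0 z(1-3) K K'(1)] K'(2) by simp
  then have "\<bar>code z - code y\<bar> < \<eta> / 2"
    using r(2) z(1) by simp
  then show False
    using z(4) \<eta> unfolding \<eta>_def by (simp add: abs_if split: if_splits)
qed

lemma closedin_code_image: "closedin rationals_top (code ` M)"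
  unfolding rationals_top_def closedin_subtopology
proof (intro exI conjI)
  show "closedin euclideanreal (closure (code ` M))"
    by simp
  show "code ` M = closure (code ` M) \<inter> \<rat>"
  proof
    show "code ` M \<subseteq> closure (code ` M) \<inter> \<rat>"
      using closure_subset code_Rats by blast
    show "closure (code ` M) \<inter> \<rat> \<subseteq> code ` M"
    proof
      fix q assume q: "q \<in> closure (code ` M) \<inter> \<rat>"
      show "q \<in> code ` M"
      proof (rule ccontr)
        assume "q \<notin> code ` M"
        then obtain \<epsilon> where "0 < \<epsilon>" "\<forall>z\<in>M. \<epsilon> \<le> \<bar>code z - q\<bar>"
          using code_image_separated q by blast
        moreover obtain x where "x \<in> code ` M" "dist x q < \<epsilon>"
          using q \<open>0 < \<epsilon>\<close> closure_approachable by blast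
        ultimately show False
          by (auto simp: dist_real_def)
      qed
    qed
  qed
qed

lemma homeomorphic_map_code: "homeomorphic_map mtopology (subtopology rationals_top (code ` M)) code"
proof -
  interpret C: Submetric UNIV dist "code ` M"
    by (simp add: Submetric_def Submetric_axioms_def Met_TC.Metric_space_axioms)
  have top: "subtopology rationals_top (code ` M) = C.sub.mtopology"
    using code_Rats by (auto simp: rationals_top_def subtopology_subtopology C.mtopology_submetric
        Int_absorb1 image_subset_iff)
  have "continuous_map mtopology C.sub.mtopology code"
    unfolding metric_continuous_map[OF C.sub.Metric_space_axioms] dist_real_def
    using code_continuous_at by (fastforce simp: abs_minus_commute)
  moreover have "continuous_map C.sub.mtopology mtopology (inv_into M code)"
    unfolding C.sub.metric_continuous_map[OF Metric_space_axioms] dist_real_def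
  proof (intro conjI ballI allI impI)
    show "inv_into M code ` code ` M \<subseteq> M"
      by (simp add: inj_on_code)
    fix a and \<epsilon> :: real assume "a \<in> code ` M" "0 < \<epsilon>"
    then obtain y where y: "y \<in> M" "a = code y"
      by blast
    obtain \<delta> where "0 < \<delta>" "\<forall>z\<in>M. \<bar>code z - code y\<bar> < \<delta> \<longrightarrow> d y z < \<epsilon>"
      using code_inverse_continuous_at[OF y(1) \<open>0 < \<epsilon>\<close>] by blast
    then show "\<exists>\<delta>>0. \<forall>x. x \<in> code ` M \<and> \<bar>a - x\<bar> < \<delta> \<longrightarrow> d (inv_into M code a) (inv_into M code x) < \<epsilon>"
      using y inj_on_code by (auto simp: abs_minus_commute)
  qed
  ultimately show ?thesis
    unfolding top homeomorphic_map_maps homeomorphic_maps_def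
    using inj_on_code by (intro exI[of _ "inv_into M code"]) auto
qed

end

lemma countable_metrizable_closed_embedding_rationals:
  assumes "countable (topspace Y)" and "metrizable_space Y"
  obtains S where "closedin rationals_top S" and "Y homeomorphic_space subtopology rationals_top S"
proof -
  obtain M d where Md: "Metric_space M d" "Y = Metric_space.mtopology M d"
    using assms(2) unfolding metrizable_space_def by blast
  interpret Metric_space M d
    by (rule Md(1))
  have M: "topspace Y = M"
    using Md(2) by simp
  show ?thesis
  proof (cases "M = {}")
    case True
    then have "Y = trivial_topology"
      using M by simp
    then show ?thesis
      using that[of "{}"] by (simp add: homeomorphic_empty_space_eq)
  next
    case False
    have "countable (case_prod d ` (M \<times> M))"
      using assms(1) M by simp
    then have "\<exists>\<rho>. \<rho> \<in> {0<..<1 / real (Suc j)} - case_prod d ` (M \<times> M)" for j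
      using uncountable_open_interval[of 0 "1 / real (Suc j)"]
      by (metis Diff_eq_empty_iff countable_subset divide_pos_pos ex_in_conv of_nat_0_less_iff
          zero_less_Suc zero_less_one)
    then obtain rho where rho: "\<And>j. rho j \<in> {0<..<1 / real (Suc j)} - case_prod d ` (M \<times> M)"
      by metis
    have "rho \<longlonglongrightarrow> 0"
    proof (rule real_tendsto_sandwich)
      show "\<forall>\<^sub>F j in sequentially. 0 \<le> rho j" "\<forall>\<^sub>F j in sequentially. rho j \<le> inverse (real (Suc j))"
        using rho by (auto simp: less_imp_le inverse_eq_divide)
    qed (use LIMSEQ_inverse_real_of_nat in simp_all)
    moreover have "d x y \<noteq> rho j" if "x \<in> M" "y \<in> M" for x y j
    proof -
      have "d x y \<in> case_prod d ` (M \<times> M)"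
        using that by force
      then show ?thesis
        using rho[of j] by auto
    qed
    moreover have "range (from_nat_into M) = M"
      using False assms(1) M by (simp add: range_from_nat_into)
    ultimately interpret enumerated_metric M d "from_nat_into M" rho
      using rho by unfold_locales auto
    show ?thesis
      using that closedin_code_image homeomorphic_map_code Md(2)
      by (metis homeomorphic_map_imp_homeomorphic_space)
  qed
qed

theorem mainTheorem19:
  fixes X :: "'a topology"
  assumes "t1_space X"
    and "selective rationals_top X"
  shows "\<forall>Y :: 'b topology. countable (topspace Y) \<and> metrizable_space Y \<longrightarrow> selective Y X"
proof (intro allI impI)
  fix Y :: "'b topology"
  assume "countable (topspace Y) \<and> metrizable_space Y"
  then obtain S where S: "closedin rationals_top S" "Y homeomorphic_space subtopology rationals_top S"
    using countable_metrizable_closed_embedding_rationals by blast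
  have "selective (subtopology rationals_top S) X"
    using assms(2) S(1) by (rule selective_closedin_subtopology)
  then show "selective Y X"
    using S(2) homeomorphic_space_sym selective_homeomorphic_space by blast
qed

end
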